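(* Consider an arbitrary finite configuration of cities in general position in the $L\times L$ square, and let $\mathcal{G}_L$ be the network defined in the context. Suppose $\mathcal{G}_L$ is not connected. Then for any city $v_0$ there exist $m\ge0$ and distinct cities $v_0,v_1,\dots,v_m$ such that (i) $d(v_0,v_1)>d(v_1,v_2)>\dots>d(v_{m-1},v_m)$; (ii) if $m=0$ then every city within distance $\Delta(v_0)$ of $v_0$ is in the same component of $\mathcal{G}_L$ as $v_0$; (iii) if $m\ge1$ then $\Delta(v_m)<d(v_0,v_1)$.
   Context: The relative neighborhood graph (RNG) on a set of cities in $\mathbb{R}^2$ joins $x,y$ iff the lune $A_{x,y}$ (intersection of the discs of radius $d(x,y)$ centred at $x$ and at $y$, $d$ Euclidean distance) contains no other city. $\mathcal{G}_L$ is the graph on the cities in the $L\times L$ square whose edges are the pairs of these cities that are edges of the RNG for this configuration together with every locally finite configuration of cities outside the square. Components are connected components of $\mathcal{G}_L$. $\Delta(v)$ is the Euclidean distance from $v$ to the boundary of the $L\times L$ square. *)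

theory Defs
  imports "HOL-Analysis.Analysis"
begin

type_synonym point = "real \<times> real"

definition square :: "real \<Rightarrow> point set" where
  "square L = cbox (0, 0) (L, L)"

definition Delta :: "real \<Rightarrow> point \<Rightarrow> real" where
  "Delta L v = infdist v (frontier (square L))"

definition lune :: "point \<Rightarrow> point \<Rightarrow> point set" where
  "lune x y = cball x (dist x y) \<inter> cball y (dist x y)"

definition rng_edge :: "point set \<Rightarrow> point \<Rightarrow> point \<Rightarrow> bool" where
  "rng_edge T x y \<longleftrightarrow> x \<in> T \<and> y \<in> T \<and> x \<noteq> y \<and> (\<forall>z \<in> T - {x, y}. z \<notin> lune x y)"

definition locally_finite_config :: "point set \<Rightarrow> bool" where
  "locally_finite_config C \<longleftrightarrow> (\<forall>B. bounded B \<longrightarrow> finite (C \<inter> B))"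

definition GL_edge :: "real \<Rightarrow> point set \<Rightarrow> point \<Rightarrow> point \<Rightarrow> bool" where
  "GL_edge L S x y \<longleftrightarrow> x \<in> S \<and> y \<in> S \<and>
     (\<forall>C. locally_finite_config C \<and> C \<inter> square L = {} \<longrightarrow> rng_edge (S \<union> C) x y)"

definition same_component :: "real \<Rightarrow> point set \<Rightarrow> point \<Rightarrow> point \<Rightarrow> bool" where
  "same_component L S x y \<longleftrightarrow> x \<in> S \<and> y \<in> S \<and> (GL_edge L S)\<^sup>*\<^sup>* x y"

definition GL_connected :: "real \<Rightarrow> point set \<Rightarrow> bool" where
  "GL_connected L S \<longleftrightarrow> (\<forall>x \<in> S. \<forall>y \<in> S. same_component L S x y)"

definition general_position :: "point set \<Rightarrow> bool" where
  "general_position S \<longleftrightarrow>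
     (\<forall>a \<in> S. \<forall>b \<in> S. \<forall>c \<in> S. \<forall>d \<in> S. a \<noteq> b \<longrightarrow> c \<noteq> d \<longrightarrow>
        dist a b = dist c d \<longrightarrow> {a, b} = {c, d})"

end

theory Submission
  imports Defs
begin

text \<open>
  For a city a call the nearest city b that lies in a different component
  of G_L the nearest foreign city of a; it exists because G_L is disconnected.  Starting
  from v0 we follow nearest foreign cities: v (i+1) is the nearest foreign city of v i.

  Key step: if the lune of v i and v (i+1) lies inside the square, the edge between them
  is missing from G_L only because some other city z lies in that lune.  General position
  makes z strictly closer to both endpoints; z is then in the component of v i (else it
  would be a nearer foreign city), hence foreign to v (i+1), so the next step of the walk
  is strictly shorter than the current one.

  Since the cities are finite, the step lengths cannot decrease forever, so some lune
  leaves the square; stopping at the first such step, the walk v 0, ..., v m (m >= 1)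
  has strictly decreasing step lengths, consists of distinct cities, and, since the
  lune of the last step contains a point outside the square,
  Delta (v m) < d(v (m-1), v m) <= d(v 0, v 1).  Case (ii) of the statement is vacuous.
\<close>

text \<open>If a closed disc around b of radius r reaches outside a closed set K containing b,
  then b is closer than r to the boundary of K: the segment from b to a point outside
  crosses the boundary strictly before its far end.\<close>
lemma infdist_frontier_less:
  fixes b p :: "'a :: euclidean_space"
  assumes K: "closed K" and b: "b \<in> K" and p: "p \<notin> K" and bp: "dist b p \<le> r"
  shows "infdist b (frontier K) < r"
proof -
  have "closed_segment b p \<inter> frontier K \<noteq> {}"
    by (rule connected_Int_frontier) (use b p in auto)
  then obtain q where q_seg: "q \<in> closed_segment b p" and q_fr: "q \<in> frontier K" by blast
  have "q \<noteq> p" using q_fr p frontier_subset_closed[OF K] by blast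
  have "dist b q < dist b p"
  proof (cases "q = b")
    case True then show ?thesis using b p by auto
  next
    case False
    with q_seg \<open>q \<noteq> p\<close> have "q \<in> open_segment b p" by (simp add: open_segment_def)
    then show ?thesis using dist_in_open_segment by (metis dist_commute)
  qed
  moreover have "infdist b (frontier K) \<le> dist b q" by (rule infdist_le[OF q_fr])
  ultimately show ?thesis using bp by linarith
qed

lemma Delta_less_if_lune_leaves_square:
  assumes b: "b \<in> square L" and leaves: "\<not> lune a b \<subseteq> square L"
  shows "Delta L b < dist a b"
proof -
  obtain p where p: "p \<in> lune a b" "p \<notin> square L" using leaves by blast
  have "dist b p \<le> dist a b" using p(1) by (auto simp: lune_def)
  then show ?thesis
    using infdist_frontier_less[OF closed_cbox] b p(2) by (simp add: Delta_def square_def)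
qed

lemma GL_edge_sym: "GL_edge L S x y \<Longrightarrow> GL_edge L S y x"
  unfolding GL_edge_def rng_edge_def lune_def by (auto simp: dist_commute)

lemma same_component_refl: "x \<in> S \<Longrightarrow> same_component L S x x"
  unfolding same_component_def by auto

lemma same_component_sym:
  assumes "same_component L S x y" shows "same_component L S y x"
proof -
  have "symp (GL_edge L S)" by (auto intro: sympI GL_edge_sym)
  then show ?thesis using assms unfolding same_component_def
    by (meson symp_rtranclp sympD)
qed

lemma same_component_trans:
  "same_component L S x y \<Longrightarrow> same_component L S y z \<Longrightarrow> same_component L S x z"
  unfolding same_component_def by (meson rtranclp_trans)

lemma GL_edge_same_component: "GL_edge L S x y \<Longrightarrow> same_component L S x y"
  unfolding same_component_def by (auto simp: GL_edge_def)

text \<open>A lune inside the square is never hit by cities outside the square, so two cities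
  whose lune lies in the square and contains no third city of S are joined in G_L.\<close>
lemma GL_edgeI:
  assumes "x \<in> S" "y \<in> S" "x \<noteq> y" and inside: "lune x y \<subseteq> square L"
    and empty: "\<forall>z \<in> S - {x, y}. z \<notin> lune x y"
  shows "GL_edge L S x y"
  unfolding GL_edge_def rng_edge_def
  using assms by blast

definition nearest_foreign :: "real \<Rightarrow> point set \<Rightarrow> point \<Rightarrow> point \<Rightarrow> bool" where
  "nearest_foreign L S a b \<longleftrightarrow> b \<in> S \<and> \<not> same_component L S a b \<and>
     (\<forall>y \<in> S. \<not> same_component L S a y \<longrightarrow> dist a b \<le> dist a y)"

lemma nearest_foreign_exists:
  assumes "finite S" and "\<not> GL_connected L S" and "a \<in> S"
  shows "\<exists>b. nearest_foreign L S a b"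
proof -
  define N where "N = {y \<in> S. \<not> same_component L S a y}"
  obtain x y where "x \<in> S" "y \<in> S" "\<not> same_component L S x y"
    using assms(2) unfolding GL_connected_def by blast
  then have "N \<noteq> {}"
    unfolding N_def using same_component_sym same_component_trans by blast
  moreover have "finite N" using assms(1) by (simp add: N_def)
  ultimately obtain b where "b \<in> N" and "\<forall>y \<in> N. dist a b \<le> dist a y"
    using arg_min_if_finite[of N "dist a"] by (metis arg_min_least)
  then show ?thesis unfolding nearest_foreign_def N_def by blast
qed

lemma nearest_foreign_step:
  assumes gp: "general_position S" and a: "a \<in> S"
    and ab: "nearest_foreign L S a b" and bc: "nearest_foreign L S b c"
    and inside: "lune a b \<subseteq> square L"
  shows "dist b c < dist a b"
proof -
  have b: "b \<in> S" and foreign: "\<not> same_component L S a b"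
    using ab by (auto simp: nearest_foreign_def)
  have "a \<noteq> b" using foreign same_component_refl a by metis
  have "\<not> GL_edge L S a b" using foreign GL_edge_same_component by metis
  then obtain z where z: "z \<in> S - {a, b}" "z \<in> lune a b"
    using GL_edgeI[OF a b \<open>a \<noteq> b\<close> inside] by blast
  have "dist a z \<noteq> dist a b" and "dist b z \<noteq> dist a b"
    using gp a b z(1) \<open>a \<noteq> b\<close> unfolding general_position_def
    by (metis doubleton_eq_iff Diff_iff insertCI)+
  with z(2) have az: "dist a z < dist a b" and bz: "dist b z < dist a b"
    by (auto simp: lune_def dist_commute)
  have "same_component L S a z"
    using ab az z(1) unfolding nearest_foreign_def by force
  then have "\<not> same_component L S b z"
    using foreign same_component_sym same_component_trans by metis
  then have "dist b c \<le> dist b z" using bc z(1) by (auto simp: nearest_foreign_def)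
  then show ?thesis using bz by linarith
qed

definition foreign_walk :: "real \<Rightarrow> point set \<Rightarrow> (nat \<Rightarrow> point) \<Rightarrow> bool" where
  "foreign_walk L S v \<longleftrightarrow> v 0 \<in> S \<and> (\<forall>i. nearest_foreign L S (v i) (v (Suc i)))"

lemma foreign_walk_exists:
  assumes "finite S" and "\<not> GL_connected L S" and "v0 \<in> S"
  shows "\<exists>v. v 0 = v0 \<and> foreign_walk L S v"
proof -
  define f where "f a = (SOME b. nearest_foreign L S a b)" for a
  have f: "nearest_foreign L S a (f a)" if "a \<in> S" for a
    unfolding f_def using someI_ex[OF nearest_foreign_exists[OF assms(1,2) that]] .
  define v where "v i = (f ^^ i) v0" for i
  have "v i \<in> S \<and> nearest_foreign L S (v i) (v (Suc i))" for i
  proof (induction i)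
    case 0 show ?case using f assms(3) by (simp add: v_def)
  next
    case (Suc i)
    then have "v (Suc i) \<in> S" by (simp add: nearest_foreign_def)
    then show ?case using f by (simp add: v_def)
  qed
  then show ?thesis unfolding foreign_walk_def using assms(3) by (intro exI[of _ v]) (simp add: v_def)
qed

context
  fixes L :: real and S :: "point set" and v :: "nat \<Rightarrow> point"
  assumes walk: "foreign_walk L S v"
begin

lemma walk_in_S: "v i \<in> S"
  using walk by (cases i) (auto simp: foreign_walk_def nearest_foreign_def)

lemma walk_foreign: "nearest_foreign L S (v i) (v (Suc i))"
  using walk by (simp add: foreign_walk_def)

text \<open>The length of step i.  It only depends on the city v i: all nearest foreign
  cities of a city are equally far from it.\<close>
definition step_len :: "nat \<Rightarrow> real" where
  "step_len i = dist (v i) (v (Suc i))"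

lemma step_len_eq_if_same_city:
  assumes "v i = v j" shows "step_len i = step_len j"
proof -
  have "dist (v i) (v (Suc i)) \<le> dist (v i) (v (Suc j))"
    and "dist (v j) (v (Suc j)) \<le> dist (v j) (v (Suc i))"
    using walk_foreign[of i] walk_foreign[of j] assms by (auto simp: nearest_foreign_def)
  then show ?thesis using assms by (simp add: step_len_def)
qed

lemma step_len_decreasing:
  assumes "general_position S" and "lune (v i) (v (Suc i)) \<subseteq> square L"
  shows "step_len (Suc i) < step_len i"
  unfolding step_len_def
  using nearest_foreign_step[OF assms(1) walk_in_S walk_foreign walk_foreign assms(2)] .

lemma step_len_strict_before:
  assumes gp: "general_position S"
    and inside: "\<forall>i < k. lune (v i) (v (Suc i)) \<subseteq> square L"
    and "i < j" "j \<le> k"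
  shows "step_len j < step_len i"
  using assms(3,4)
proof (induction j)
  case 0 then show ?case by simp
next
  case (Suc j)
  have "step_len (Suc j) < step_len j" using step_len_decreasing[OF gp] inside Suc.prems by auto
  then show ?case using Suc by (cases "i = j") auto
qed

text \<open>On a finite set of cities the step lengths cannot decrease forever: a strictly
  decreasing step length would make the walk injective.\<close>
lemma walk_leaves_square:
  assumes "finite S" and gp: "general_position S"
  shows "\<exists>i. \<not> lune (v i) (v (Suc i)) \<subseteq> square L"
proof (rule ccontr)
  assume "\<not> ?thesis"
  then have "step_len j < step_len i" if "i < j" for i j
    using step_len_strict_before[OF gp _ that, of j] by blast
  then have "inj v"
    by (metis injI step_len_eq_if_same_city nat_neq_iff less_irrefl)
  moreover have "range v \<subseteq> S" using walk_in_S by blast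
  ultimately show False using assms(1) by (meson finite_imageD finite_subset infinite_UNIV_nat)
qed

text \<open>The walk visits distinct cities up to one step after the first exit.  The last
  city cannot repeat v i: it is foreign to v k, so v k would be a foreign city of
  v i closer than v (i+1).\<close>
lemma walk_inj_on:
  assumes gp: "general_position S"
    and inside: "\<forall>i < k. lune (v i) (v (Suc i)) \<subseteq> square L"
  shows "inj_on v {0..Suc k}"
proof -
  have last_foreign: "\<not> same_component L S (v (Suc k)) (v k)"
    using walk_foreign[of k] same_component_sym unfolding nearest_foreign_def by blast
  have "v i \<noteq> v j" if "i < j" "j \<le> Suc k" for i j
  proof
    assume eq: "v i = v j"
    show False
    proof (cases "j \<le> k")
      case True
      then show False
        using step_len_strict_before[OF gp inside that(1)] step_len_eq_if_same_city[OF eq] by simp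
    next
      case False
      then have j: "j = Suc k" using that(2) by simp
      show False
      proof (cases "i = k")
        case True then show False using eq j last_foreign same_component_refl walk_in_S by metis
      next
        case False
        then have "i < k" using that j by simp
        have "step_len i \<le> dist (v i) (v k)"
          using walk_foreign[of i] last_foreign walk_in_S eq j
          by (auto simp: nearest_foreign_def step_len_def)
        also have "\<dots> = step_len k" using eq j by (simp add: step_len_def dist_commute)
        finally show False using step_len_strict_before[OF gp inside \<open>i < k\<close> le_refl] by simp
      qed
    qed
  qed
  then show ?thesis by (metis inj_onI atLeastAtMost_iff linorder_neqE_nat)
qed

end

theorem lemma4:
  fixes L :: real and S :: "point set" and v0 :: point
  assumes "L > 0"
    and "finite S" and "S \<subseteq> square L"
    and "general_position S"
    and "\<not> GL_connected L S"
    and "v0 \<in> S"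
  shows "\<exists>(m::nat) (v::nat \<Rightarrow> point).
           v 0 = v0 \<and> (\<forall>i \<le> m. v i \<in> S) \<and> inj_on v {0..m} \<and>
           (\<forall>i. Suc i < m \<longrightarrow> dist (v i) (v (Suc i)) > dist (v (Suc i)) (v (Suc (Suc i)))) \<and>
           (m = 0 \<longrightarrow> (\<forall>w \<in> S. dist v0 w \<le> Delta L v0 \<longrightarrow> same_component L S v0 w)) \<and>
           (m \<ge> 1 \<longrightarrow> Delta L (v m) < dist (v 0) (v 1))"
proof -
  obtain v where v0: "v 0 = v0" and walk: "foreign_walk L S v"
    using foreign_walk_exists[OF assms(2,5,6)] by blast
  let ?leaves = "\<lambda>i. \<not> lune (v i) (v (Suc i)) \<subseteq> square L"
  define k where "k = (LEAST i. ?leaves i)"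
  have leaves: "?leaves k"
    unfolding k_def by (rule LeastI_ex[OF walk_leaves_square[OF walk assms(2,4)]])
  have inside: "\<forall>i < k. lune (v i) (v (Suc i)) \<subseteq> square L"
    unfolding k_def using not_less_Least by blast
  note decreasing = step_len_strict_before[OF walk assms(4) inside]
  have "Delta L (v (Suc k)) < step_len v k"
    using Delta_less_if_lune_leaves_square[OF _ leaves] walk_in_S[OF walk] assms(3)
    by (auto simp: step_len_def[OF walk])
  also have "\<dots> \<le> step_len v 0" using decreasing[of 0 k] by (cases k) auto
  finally have "Delta L (v (Suc k)) < dist (v 0) (v 1)" by (simp add: step_len_def[OF walk])
  moreover have "\<forall>i. Suc i < Suc k \<longrightarrow> dist (v i) (v (Suc i)) > dist (v (Suc i)) (v (Suc (Suc i)))"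
    using decreasing by (simp add: step_len_def[OF walk])
  ultimately show ?thesis
    using v0 walk_in_S[OF walk] walk_inj_on[OF walk assms(4) inside] by blast
qed

end
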